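(* Let $S>0$ and let $D=(D[1],\dots,D[n])$ be a vector of demands with $0<D[i]\le S$ for all $i$. Then there exists an integer $k$ with $1\le k\le a(n)$ such that the egalitarian connection-time of the electricity division instance $(S,D)$ equals $\frac{k}{OPT(D_k)}$. Moreover, this value is attained by taking an optimal $k$-times bin packing of $D$ (with $OPT(D_k)$ bins) and connecting the set of households in each bin during a fraction $\frac{1}{OPT(D_k)}$ of the time interval (the bins being connected during pairwise disjoint subintervals).
   Context: Electricity division: there is a supply $S>0$, $n$ households with demands $D[1],\dots,D[n]$, and a time interval $[0,T]$. A schedule is a partition of $[0,T]$ into finitely many subintervals $I_1,\dots,I_p$ together with sets $A_1,\dots,A_p\subseteq\{1,\dots,n\}$ such that $\sum_{i\in A_l}D[i]\le S$ for each $l$; household $i$ receives connection time $u_i=\sum_{l:\,i\in A_l}|I_l|$. The egalitarian connection-time is $\max_{\text{schedules}}\min_i u_i/T$ (the largest fraction of the time that every household can simultaneously be guaranteed). $k$-times bin packing: given a bin capacity $S$, items $1,\dots,n$ with sizes $D[i]$, and an integer $k\ge1$, $D_k$ denotes the collection of $k$ copies of each item; a $k$-times bin packing is an assignment of all copies in $D_k$ to bins such that the total size in each bin is at most $S$ and no bin contains two copies of the same item (so each item lies in exactly $k$ distinct bins). $OPT(D_k)$ is the minimum number of bins of a $k$-times bin packing. For a positive integer $n$, $a(n)$ denotes the maximum determinant of an $n\times n$ matrix all of whose entries are $0$ or $1$. *)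

theory Defs
  imports Main "Jordan_Normal_Form.Determinant"
begin

definition feasible_set :: "real \<Rightarrow> (nat \<Rightarrow> real) \<Rightarrow> nat \<Rightarrow> nat set \<Rightarrow> bool" where
  "feasible_set S D n A \<longleftrightarrow> A \<subseteq> {1..n} \<and> (\<Sum>i\<in>A. D i) \<le> S"

text \<open>A schedule: a finite list of consecutive subintervals of [0,T], given by their
  (positive) lengths, which sum to T, each with a feasible set of connected households.\<close>
definition is_schedule :: "real \<Rightarrow> (nat \<Rightarrow> real) \<Rightarrow> nat \<Rightarrow> real \<Rightarrow> (real \<times> nat set) list \<Rightarrow> bool" where
  "is_schedule S D n T sch \<longleftrightarrow>
     (\<forall>(l, A) \<in> set sch. l > 0 \<and> feasible_set S D n A) \<and> sum_list (map fst sch) = T"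

definition conn_time :: "(real \<times> nat set) list \<Rightarrow> nat \<Rightarrow> real" where
  "conn_time sch i = sum_list (map fst (filter (\<lambda>(l, A). i \<in> A) sch))"

definition egal_conn_time :: "real \<Rightarrow> (nat \<Rightarrow> real) \<Rightarrow> nat \<Rightarrow> real \<Rightarrow> real" where
  "egal_conn_time S D n T =
     Sup {(MIN i\<in>{1..n}. conn_time sch i) / T | sch. is_schedule S D n T sch}"

text \<open>k-times bin packing: a list of bins; each bin is a set of items (no two copies of
  the same item in a bin), fits the capacity, and each item lies in exactly k bins.\<close>
definition is_k_packing :: "real \<Rightarrow> (nat \<Rightarrow> real) \<Rightarrow> nat \<Rightarrow> nat \<Rightarrow> nat set list \<Rightarrow> bool" where
  "is_k_packing S D n k B \<longleftrightarrow>
     (\<forall>b\<in>set B. feasible_set S D n b) \<and>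
     (\<forall>i\<in>{1..n}. card {j. j < length B \<and> i \<in> B ! j} = k)"

definition OPT :: "real \<Rightarrow> (nat \<Rightarrow> real) \<Rightarrow> nat \<Rightarrow> nat \<Rightarrow> nat" where
  "OPT S D n k = (LEAST m. \<exists>B. is_k_packing S D n k B \<and> length B = m)"

text \<open>a(n): maximum determinant of an n x n 0/1 matrix.\<close>
definition maxdet01 :: "nat \<Rightarrow> int" where
  "maxdet01 n = Max (det ` {A :: int mat. A \<in> carrier_mat n n \<and>
       (\<forall>i<n. \<forall>j<n. A $$ (i, j) \<in> {0, 1})})"

end

theory Submission
  imports Defs "HOL-Library.Function_Algebras" "HOL-Library.Indicator_Function"
begin

(* The egalitarian connection time equals 1 / V, where V is the optimum of the configuration LP:
   put weights y A >= 0 on the nonempty feasible sets A so that every household is covered with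
   total weight exactly 1, and minimise the total weight. A schedule whose minimum connection time
   is t T becomes, after rescaling by 1 / (t T) and disconnecting households wherever they are
   connected for too long, an exact cover of weight 1 / t; a k-times packing B gives the exact
   cover (multiplicity in B) / k of weight |B| / k. An optimal basic solution has linearly
   independent support; completing it to a basis of R^n by unit vectors and applying Cramer's
   rule to the resulting 0/1 matrix M shows that k y is integral for k = |det M| <= a(n). Taking
   k y A copies of every configuration A gives a k-times packing with k V bins, so
   OPT(D_k) = k V, and serving its bins for equal times attains k / OPT(D_k) = 1 / V. *)

section \<open>Linear independence of indicator functions\<close>

(* Function types carry no real_vector instance, so the vector space 'a => real is set up here. *)
interpretation fun_vec: vector_space "\<lambda>(c::real) (f::'a \<Rightarrow> real) x. c * f x"
  by unfold_locales (auto simp: algebra_simps fun_eq_iff)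

lemma sum_fun_apply: "(\<Sum>v\<in>V. f v) x = (\<Sum>v\<in>V. f v x)"
  by (induction V rule: infinite_finite_induct) (auto simp: func_plus func_zero)

lemma inj_indicator_real: "inj indicat_real"
  by (rule injI) (metis indicator_eq_1_iff subsetI subset_antisym)

definition indicators_lin_indep :: "'a set set \<Rightarrow> bool" where
  "indicators_lin_indep G \<longleftrightarrow>
     (\<forall>z. (\<forall>i. (\<Sum>A\<in>G. z A * indicat_real A i) = 0) \<longrightarrow> (\<forall>A\<in>G. z A = 0))"

lemma indicators_lin_indep_iff_independent:
  assumes "finite G"
  shows "indicators_lin_indep G \<longleftrightarrow> fun_vec.independent (indicat_real ` G)"
proof -
  have inj: "inj_on indicat_real G"
    using inj_indicator_real by (rule inj_on_subset) simp
  have comb: "(\<Sum>v\<in>indicat_real ` G. (\<lambda>x. u v * v x)) = 0 \<longleftrightarrow>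
      (\<forall>i. (\<Sum>A\<in>G. u (indicat_real A) * indicat_real A i) = 0)" for u
    by (simp add: sum.reindex[OF inj] fun_eq_iff sum_fun_apply)
  have "indicators_lin_indep G \<longleftrightarrow>
      (\<forall>u. (\<forall>i. (\<Sum>A\<in>G. u (indicat_real A) * indicat_real A i) = 0) \<longrightarrow>
        (\<forall>A\<in>G. u (indicat_real A) = 0))"
    unfolding indicators_lin_indep_def
  proof (intro iffI allI impI)
    fix u :: "('a \<Rightarrow> real) \<Rightarrow> real"
    assume indep: "\<forall>z. (\<forall>i. (\<Sum>A\<in>G. z A * indicat_real A i) = 0) \<longrightarrow> (\<forall>A\<in>G. z A = 0)"
      and "\<forall>i. (\<Sum>A\<in>G. u (indicat_real A) * indicat_real A i) = 0"
    then show "\<forall>A\<in>G. u (indicat_real A) = 0"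
      using indep[rule_format, of "\<lambda>A. u (indicat_real A)"] by simp
  next
    fix z :: "'a set \<Rightarrow> real"
    assume indep: "\<forall>u. (\<forall>i. (\<Sum>A\<in>G. u (indicat_real A) * indicat_real A i) = 0) \<longrightarrow>
        (\<forall>A\<in>G. u (indicat_real A) = 0)"
      and "\<forall>i. (\<Sum>A\<in>G. z A * indicat_real A i) = 0"
    then show "\<forall>A\<in>G. z A = 0"
      using indep[rule_format, of "\<lambda>v. z (the_inv_into G indicator v)"]
      by (simp add: the_inv_into_f_f[OF inj])
  qed
  then show ?thesis
    unfolding fun_vec.dependent_finite[OF finite_imageI[OF assms]] comb
    by (auto simp: inj)
qed

lemma indicators_lin_indep_singletons:
  assumes "finite U"
  shows "indicators_lin_indep ((\<lambda>i. {i}) ` U)"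
  unfolding indicators_lin_indep_def
proof (intro allI impI ballI)
  fix z A
  assume comb: "\<forall>i. (\<Sum>B\<in>(\<lambda>i. {i}) ` U. z B * indicat_real B i) = 0"
    and "A \<in> (\<lambda>i. {i}) ` U"
  then obtain i where "i \<in> U" "A = {i}" by blast
  have "(\<Sum>B\<in>(\<lambda>i. {i}) ` U. z B * indicat_real B i) = (\<Sum>j\<in>U. z {j} * indicat_real {j} i)"
    by (simp add: sum.reindex)
  also have "\<dots> = z {i}"
    using \<open>i \<in> U\<close> assms by (simp add: indicator_def)
  finally show "z A = 0" using comb \<open>A = {i}\<close> by simp
qed

lemma indicator_in_span_singletons:
  assumes "finite U" "A \<subseteq> U"
  shows "indicat_real A \<in> fun_vec.span (indicat_real ` (\<lambda>i. {i}) ` U)"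
proof -
  have "indicat_real A = (\<Sum>i\<in>A. indicat_real {i})"
    using finite_subset[OF assms(2,1)] by (simp add: fun_eq_iff sum_fun_apply indicator_def)
  also have "\<dots> \<in> fun_vec.span (indicat_real ` (\<lambda>i. {i}) ` U)"
    using assms(2) by (intro fun_vec.span_sum fun_vec.span_base) auto
  finally show ?thesis .
qed

lemma indicators_lin_indep_extend:
  assumes U: "finite U" and G: "G \<subseteq> Pow U" and indep: "indicators_lin_indep G"
  obtains G' where "G \<subseteq> G'" "G' \<subseteq> Pow U" "card G' = card U" "indicators_lin_indep G'"
proof -
  let ?Sg = "(\<lambda>i. {i}) ` U"
  have fin: "finite (G \<union> ?Sg)"
    using G U by (auto intro: finite_subset[of G "Pow U"])
  have inj: "inj_on indicat_real X" for X :: "'a set set"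
    using inj_indicator_real by (rule inj_on_subset) simp
  obtain Bs where Bs: "indicat_real ` G \<subseteq> Bs" "Bs \<subseteq> indicat_real ` (G \<union> ?Sg)"
    "fun_vec.independent Bs" "indicat_real ` (G \<union> ?Sg) \<subseteq> fun_vec.span Bs"
    using fun_vec.maximal_independent_subset_extend[of "indicat_real ` G" "indicat_real ` (G \<union> ?Sg)"]
      indep indicators_lin_indep_iff_independent[of G] fin by (auto intro: finite_subset)
  have card_Sg: "card (indicat_real ` ?Sg) = card U"
    by (simp add: card_image[OF inj] card_image inj_on_def)
  have "Bs \<subseteq> fun_vec.span (indicat_real ` ?Sg)"
    using Bs(2) G U by (auto intro!: indicator_in_span_singletons)
  then have Bs_fin: "finite Bs" and "card Bs \<le> card U"
    using fun_vec.independent_span_bound[OF _ Bs(3), of "indicat_real ` ?Sg"] card_Sg U by auto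
  moreover have "card U \<le> card Bs"
    using fun_vec.independent_span_bound[OF Bs_fin, of "indicat_real ` ?Sg"] Bs(4) card_Sg U
      indicators_lin_indep_singletons[OF U] indicators_lin_indep_iff_independent[of ?Sg]
    by auto
  ultimately have card_Bs: "card Bs = card U" by simp
  define G' where "G' = {A \<in> G \<union> ?Sg. indicat_real A \<in> Bs}"
  have image: "indicat_real ` G' = Bs"
    using Bs(2) unfolding G'_def by auto
  have "finite G'" using fin unfolding G'_def by simp
  show ?thesis
  proof
    show "G \<subseteq> G'" using Bs(1) unfolding G'_def by auto
    show "G' \<subseteq> Pow U" using G unfolding G'_def by auto
    show "card G' = card U" using card_image[OF inj, of G'] image card_Bs by simp
    show "indicators_lin_indep G'"
      using indicators_lin_indep_iff_independent[OF \<open>finite G'\<close>] image Bs(3) by simp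
  qed
qed

section \<open>Integral solutions of 0/1 systems\<close>

lemma finite_01_matrices:
  "finite {M :: int mat. M \<in> carrier_mat n n \<and> (\<forall>i<n. \<forall>j<n. M $$ (i, j) \<in> {0, 1})}"
proof (rule finite_subset)
  let ?P = "PiE ({..<n} \<times> {..<n}) (\<lambda>_. {0, 1::int})"
  show "{M :: int mat. M \<in> carrier_mat n n \<and> (\<forall>i<n. \<forall>j<n. M $$ (i, j) \<in> {0, 1})}
      \<subseteq> (\<lambda>f. mat n n f) ` ?P"
  proof
    fix M :: "int mat"
    assume "M \<in> {M. M \<in> carrier_mat n n \<and> (\<forall>i<n. \<forall>j<n. M $$ (i, j) \<in> {0, 1})}"
    then have M: "M \<in> carrier_mat n n" "\<forall>i<n. \<forall>j<n. M $$ (i, j) \<in> {0, 1}" by auto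
    let ?f = "restrict (\<lambda>p. M $$ p) ({..<n} \<times> {..<n})"
    have "M = mat n n ?f" using M(1) by (intro eq_matI) auto
    moreover have "?f \<in> ?P" using M(2) by auto
    ultimately show "M \<in> (\<lambda>f. mat n n f) ` ?P" by blast
  qed
  show "finite ((\<lambda>f. mat n n f) ` ?P)" by (intro finite_imageI finite_PiE) auto
qed

lemma abs_det_le_maxdet01:
  fixes M :: "int mat"
  assumes M: "M \<in> carrier_mat n n" and entries: "\<forall>i<n. \<forall>j<n. M $$ (i, j) \<in> {0, 1}"
  shows "\<bar>det M\<bar> \<le> maxdet01 n"
proof -
  obtain M' where M': "M' \<in> carrier_mat n n" "\<forall>i<n. \<forall>j<n. M' $$ (i, j) \<in> {0, 1}"
    "det M' = \<bar>det M\<bar>"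
  proof (cases "det M \<ge> 0")
    case True
    then show ?thesis using M entries that[of M] by auto
  next
    case False
    have "n \<noteq> 0"
    proof
      assume "n = 0"
      then show False using False M by simp
    qed
    moreover have "n \<noteq> 1" using False M entries det_single[of M] by auto
    ultimately have "1 < n" by simp
    then show ?thesis
      using False M entries det_swaprows[of 0 n 1 M] that[of "swaprows 0 1 M"] by auto
  qed
  show ?thesis
    unfolding maxdet01_def M'(3)[symmetric] using finite_01_matrices[of n] M'(1,2)
    by (intro Max_ge) auto
qed

lemma abs_det_mult_solution_Ints:
  fixes M :: "int mat" and x :: "real vec"
  assumes M: "M \<in> carrier_mat n n" and x: "x \<in> carrier_vec n" and j: "j < n"
    and sol: "map_mat real_of_int M *\<^sub>v x = map_vec real_of_int b"
  shows "real_of_int \<bar>det M\<bar> * x $ j \<in> \<int>"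
proof -
  have "x $ j * real_of_int (det M) = det (replace_col (map_mat real_of_int M) (map_vec real_of_int b) j)"
    using cramer_lemma_mat[of "map_mat real_of_int M" n x j] M x j sol by simp
  also have "replace_col (map_mat real_of_int M) (map_vec real_of_int b) j
      = map_mat real_of_int (replace_col M b j)"
  proof -
    have "dim_vec b = n" using arg_cong[OF sol, of dim_vec] M by simp
    then show ?thesis using M by (intro eq_matI) (auto simp: replace_col_def sol)
  qed
  finally have "x $ j * real_of_int (det M) \<in> \<int>" by simp
  moreover have "real_of_int \<bar>det M\<bar> * x $ j = x $ j * real_of_int (det M) \<or>
      real_of_int \<bar>det M\<bar> * x $ j = - (x $ j * real_of_int (det M))"
    by (simp add: abs_if)
  ultimately show ?thesis by (metis Ints_minus)
qed

lemma sum_set_distinct_nth: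
  "distinct xs \<Longrightarrow> (\<Sum>x\<in>set xs. f x) = (\<Sum>j<length xs. f (xs ! j))"
  using sum.reindex_bij_betw[OF bij_betw_nth[of xs "{..<length xs}" "set xs"], of f] by simp

lemma indicators_lin_indep_nth:
  assumes gs: "distinct gs" and indep: "indicators_lin_indep (set gs)"
    and comb: "\<forall>i. (\<Sum>j<length gs. w j * indicat_real (gs ! j) i) = 0" and j: "j < length gs"
  shows "w j = 0"
proof -
  have inj: "inj_on ((!) gs) {..<length gs}"
    using gs by (simp add: inj_on_nth)
  define z where "z A = w (the_inv_into {..<length gs} ((!) gs) A)" for A
  have z_nth: "z (gs ! j) = w j" if "j < length gs" for j
    using that unfolding z_def by (simp add: the_inv_into_f_f[OF inj])
  have "\<forall>i. (\<Sum>A\<in>set gs. z A * indicat_real A i) = 0"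
    using comb by (simp add: sum_set_distinct_nth[OF gs] z_nth)
  then have "z (gs ! j) = 0"
    using indep j unfolding indicators_lin_indep_def by simp
  then show ?thesis using z_nth[OF j] by simp
qed

definition incidence_mat :: "'a list \<Rightarrow> 'a set list \<Rightarrow> int mat" where
  "incidence_mat us gs = mat (length us) (length gs) (\<lambda>(i, j). if us ! i \<in> gs ! j then 1 else 0)"

lemma incidence_mat_carrier: "incidence_mat us gs \<in> carrier_mat (length us) (length gs)"
  by (simp add: incidence_mat_def)

lemma incidence_mat_mult_vec:
  assumes "i < length us" "w \<in> carrier_vec (length gs)"
  shows "(map_mat real_of_int (incidence_mat us gs) *\<^sub>v w) $ i
    = (\<Sum>j<length gs. w $ j * indicat_real (gs ! j) (us ! i))"
proof -
  have "(map_mat real_of_int (incidence_mat us gs) *\<^sub>v w) $ i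
      = (\<Sum>j<length gs. real_of_int (if us ! i \<in> gs ! j then 1 else 0) * w $ j)"
    using assms by (simp add: incidence_mat_def scalar_prod_def atLeast0LessThan)
  also have "\<dots> = (\<Sum>j<length gs. w $ j * indicat_real (gs ! j) (us ! i))"
    by (intro sum.cong) auto
  finally show ?thesis .
qed

lemma det_incidence_mat_nonzero:
  assumes gs: "distinct gs" "indicators_lin_indep (set gs)" "set gs \<subseteq> Pow (set us)"
    and square: "length us = length gs"
  shows "det (incidence_mat us gs) \<noteq> 0"
proof
  let ?n = "length gs"
  let ?M = "map_mat real_of_int (incidence_mat us gs)"
  assume "det (incidence_mat us gs) = 0"
  then have "det ?M = 0" by simp
  then obtain v where v: "v \<in> carrier_vec ?n" "v \<noteq> 0\<^sub>v ?n" "?M *\<^sub>v v = 0\<^sub>v ?n"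
    using det_0_iff_vec_prod_zero_field[of ?M ?n] incidence_mat_carrier[of us gs] square by auto
  have "(\<Sum>j<?n. v $ j * indicat_real (gs ! j) i) = 0" for i
  proof (cases "i \<in> set us")
    case True
    then obtain r where "r < length us" "i = us ! r" by (auto simp: in_set_conv_nth)
    then show ?thesis
      using incidence_mat_mult_vec[of r us v gs] v(1,3) square by simp
  next
    case False
    then have "i \<notin> gs ! j" if "j < ?n" for j using gs(3) nth_mem[OF that] by blast
    then show ?thesis by simp
  qed
  then have "v $ j = 0" if "j < ?n" for j
    using indicators_lin_indep_nth[OF gs(1,2), of "\<lambda>j. v $ j"] that by blast
  then have "v = 0\<^sub>v ?n" using v(1) by (intro eq_vecI) auto
  then show False using v(2) by contradiction
qed

lemma incidence_system_solution_denominator: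
  assumes us: "distinct us" and gs: "distinct gs" "indicators_lin_indep (set gs)"
    "set gs \<subseteq> Pow (set us)" and square: "length us = length gs"
    and sol: "\<forall>i\<in>set us. (\<Sum>A\<in>set gs. y A * indicat_real A i) = 1"
  shows "\<exists>k::nat. 1 \<le> k \<and> int k \<le> maxdet01 (length us) \<and> (\<forall>A\<in>set gs. real k * y A \<in> \<int>)"
proof -
  define n where "n = length gs"
  define M where "M = incidence_mat us gs"
  have M: "M \<in> carrier_mat n n" using incidence_mat_carrier[of us gs] square unfolding M_def n_def by simp
  have det_nz: "det M \<noteq> 0"
    unfolding M_def using det_incidence_mat_nonzero[OF gs square] .
  have det_le: "\<bar>det M\<bar> \<le> maxdet01 n"
    using abs_det_le_maxdet01[OF M] by (simp add: M_def incidence_mat_def n_def square)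
  define x where "x = vec n (\<lambda>j. y (gs ! j))"
  have Mx: "map_mat real_of_int M *\<^sub>v x = map_vec real_of_int (vec n (\<lambda>_. 1))"
  proof (rule eq_vecI)
    fix i assume "i < dim_vec (map_vec real_of_int (vec n (\<lambda>_. 1::int)))"
    then have i: "i < length us" using square by (simp add: n_def)
    have "(map_mat real_of_int M *\<^sub>v x) $ i = (\<Sum>A\<in>set gs. y A * indicat_real A (us ! i))"
      using incidence_mat_mult_vec[OF i, of x gs] by (simp add: M_def x_def n_def sum_set_distinct_nth[OF gs(1)])
    also have "\<dots> = 1" using sol i by simp
    finally show "(map_mat real_of_int M *\<^sub>v x) $ i = map_vec real_of_int (vec n (\<lambda>_. 1)) $ i"
      using i square by (simp add: n_def)
  qed (use M in simp)
  have "real (nat \<bar>det M\<bar>) * y A \<in> \<int>" if A: "A \<in> set gs" for A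
  proof -
    obtain j where j: "j < n" "A = gs ! j" using A unfolding n_def by (auto simp: in_set_conv_nth)
    have "real_of_int \<bar>det M\<bar> * x $ j \<in> \<int>"
      using abs_det_mult_solution_Ints[OF M _ j(1) Mx] by (simp add: x_def)
    then show ?thesis using j by (simp add: x_def)
  qed
  moreover have "1 \<le> nat \<bar>det M\<bar>" using det_nz by simp
  moreover have "int (nat \<bar>det M\<bar>) \<le> maxdet01 (length us)" using det_le square by (simp add: n_def)
  ultimately show ?thesis by blast
qed

lemma indicators_lin_indep_solution_denominator:
  assumes U: "finite U" and G: "G \<subseteq> Pow U" "indicators_lin_indep G"
    and sol: "\<forall>i\<in>U. (\<Sum>A\<in>G. y A * indicat_real A i) = 1"
  shows "\<exists>k::nat. 1 \<le> k \<and> int k \<le> maxdet01 (card U) \<and> (\<forall>A\<in>G. real k * y A \<in> \<int>)"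
proof -
  obtain G' where G': "G \<subseteq> G'" "G' \<subseteq> Pow U" "card G' = card U" "indicators_lin_indep G'"
    using indicators_lin_indep_extend[OF U G] by blast
  have "finite G'" using G'(2) U by (meson finite_Pow_iff finite_subset)
  obtain us where us: "set us = U" "distinct us" using finite_distinct_list[OF U] by blast
  obtain gs where gs: "set gs = G'" "distinct gs" using finite_distinct_list[OF \<open>finite G'\<close>] by blast
  define y' where "y' A = (if A \<in> G then y A else 0)" for A
  have "(\<Sum>A\<in>G'. y' A * indicat_real A i) = (\<Sum>A\<in>G. y A * indicat_real A i)" for i
    unfolding y'_def using \<open>finite G'\<close> G'(1) by (intro sum.mono_neutral_cong_right) auto
  then have sol': "\<forall>i\<in>set us. (\<Sum>A\<in>set gs. y' A * indicat_real A i) = 1"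
    using sol us(1) gs(1) by simp
  have len: "length us = card U" "length gs = card U"
    using us gs G'(3) distinct_card by metis+
  have "indicators_lin_indep (set gs)" "set gs \<subseteq> Pow (set us)" using gs(1) us(1) G'(2,4) by simp_all
  then obtain k :: nat where k: "1 \<le> k" "int k \<le> maxdet01 (card U)" "\<forall>A\<in>G'. real k * y' A \<in> \<int>"
    using incidence_system_solution_denominator[OF us(2) gs(2) _ _ _ sol'] len gs(1) by auto
  have "real k * y A \<in> \<int>" if "A \<in> G" for A
  proof -
    have "real k * y' A \<in> \<int>" using k(3) G'(1) that by blast
    then show ?thesis using that by (simp add: y'_def)
  qed
  then show ?thesis using k(1,2) by blast
qed

section \<open>The configuration LP\<close>

lemma ratio_test:
  fixes y z :: "'b \<Rightarrow> real"
  assumes G: "finite G" and y: "\<forall>A\<in>G. 0 \<le> y A" and neg: "\<exists>A\<in>G. z A < 0"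
  obtains t where "0 \<le> t" "\<forall>A\<in>G. 0 \<le> y A + t * z A" "\<exists>A\<in>G. z A < 0 \<and> y A + t * z A = 0"
proof -
  define Q where "Q = {A\<in>G. z A < 0}"
  have Q: "finite Q" "Q \<noteq> {}" using G neg unfolding Q_def by auto
  define t where "t = Min ((\<lambda>A. y A / - z A) ` Q)"
  have "t \<in> (\<lambda>A. y A / - z A) ` Q" unfolding t_def using Q by (intro Min_in) auto
  then obtain A0 where A0: "A0 \<in> Q" "t = y A0 / - z A0" by blast
  show ?thesis
  proof
    show "0 \<le> t" using A0 y unfolding Q_def by (auto simp: divide_nonneg_neg)
    show "\<forall>A\<in>G. 0 \<le> y A + t * z A"
    proof
      fix A assume "A \<in> G"
      show "0 \<le> y A + t * z A"
      proof (cases "z A < 0")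
        case True
        then have "t \<le> y A / - z A" using \<open>A \<in> G\<close> Q(1) unfolding t_def Q_def by auto
        then have "t * - z A \<le> y A" using True by (simp only: pos_le_divide_eq neg_0_less_iff_less)
        then show ?thesis by simp
      next
        case False
        then show ?thesis using \<open>0 \<le> t\<close> \<open>A \<in> G\<close> y by simp
      qed
    qed
    show "\<exists>A\<in>G. z A < 0 \<and> y A + t * z A = 0" using A0 unfolding Q_def by auto
  qed
qed

lemma dependent_indicators_descent:
  assumes G: "finite G" "{} \<notin> G" and dep: "\<not> indicators_lin_indep G"
  obtains z where "\<forall>i. (\<Sum>A\<in>G. z A * indicat_real A i) = 0" "(\<Sum>A\<in>G. z A) \<le> 0" "\<exists>A\<in>G. z A < 0"
proof -
  obtain z0 A1 where z0: "\<forall>i. (\<Sum>A\<in>G. z0 A * indicat_real A i) = 0" and A1: "A1 \<in> G" "z0 A1 \<noteq> 0"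
    using dep unfolding indicators_lin_indep_def by blast
  obtain z where z: "\<forall>i. (\<Sum>A\<in>G. z A * indicat_real A i) = 0" "(\<Sum>A\<in>G. z A) \<le> 0" "z A1 \<noteq> 0"
  proof (cases "(\<Sum>A\<in>G. z0 A) \<le> 0")
    case True
    then show ?thesis using that z0 A1 by blast
  next
    case False
    then show ?thesis using that[of "\<lambda>A. - z0 A"] z0 A1 by (simp add: sum_negf)
  qed
  have "\<exists>A\<in>G. z A < 0"
  proof (rule ccontr)
    assume "\<not> ?thesis"
    then have nonneg: "\<forall>A\<in>G. 0 \<le> z A" by auto
    obtain i where "i \<in> A1" using A1(1) G(2) by (metis all_not_in_conv)
    have "\<forall>A\<in>G. z A * indicat_real A i = 0"
      using sum_nonneg_eq_0_iff[of G "\<lambda>A. z A * indicat_real A i"] G(1) nonneg z(1) by auto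
    then show False using A1 \<open>i \<in> A1\<close> z(3) by auto
  qed
  then show ?thesis using that z(1,2) by blast
qed

locale exact_cover_lp =
  fixes U :: "'a set" and F :: "'a set set"
  assumes finite_U: "finite U" and F_subsets: "F \<subseteq> Pow U" and empty_notin_F: "{} \<notin> F"
    and singletons_in_F: "i \<in> U \<Longrightarrow> {i} \<in> F"
begin

lemma finite_F: "finite F"
  using F_subsets finite_U by (meson finite_Pow_iff finite_subset)

definition exact_cover :: "('a set \<Rightarrow> real) \<Rightarrow> bool" where
  "exact_cover y \<longleftrightarrow> (\<forall>A\<in>F. 0 \<le> y A) \<and> (\<forall>i\<in>U. (\<Sum>A\<in>F. y A * indicat_real A i) = 1)"

definition support :: "('a set \<Rightarrow> real) \<Rightarrow> 'a set set" where
  "support y = {A\<in>F. y A \<noteq> 0}"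

definition cover_value :: real where
  "cover_value = Inf {\<Sum>A\<in>F. y A | y. exact_cover y}"

lemma support_subset: "support y \<subseteq> F"
  by (auto simp: support_def)

lemma sum_support: "(\<Sum>A\<in>F. y A * f A) = (\<Sum>A\<in>support y. y A * f A)"
  using finite_F by (intro sum.mono_neutral_right) (auto simp: support_def)

lemma exact_cover_singletons: "exact_cover (indicator ((\<lambda>i. {i}) ` U))"
  unfolding exact_cover_def
proof (intro conjI ballI)
  fix i assume "i \<in> U"
  have "(\<Sum>A\<in>F. indicat_real ((\<lambda>i. {i}) ` U) A * indicat_real A i) = (\<Sum>A\<in>F. if A = {i} then 1 else 0)"
    using \<open>i \<in> U\<close> by (intro sum.cong) (auto simp: indicator_def)
  also have "\<dots> = 1" using finite_F singletons_in_F[OF \<open>i \<in> U\<close>] by simp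
  finally show "(\<Sum>A\<in>F. indicat_real ((\<lambda>i. {i}) ` U) A * indicat_real A i) = 1" .
qed simp

lemma exact_cover_pivot:
  assumes y: "exact_cover y" and dep: "\<not> indicators_lin_indep (support y)"
  obtains y' where "exact_cover y'" "support y' \<subset> support y" "(\<Sum>A\<in>F. y' A) \<le> (\<Sum>A\<in>F. y A)"
proof -
  let ?G = "support y"
  have G: "finite ?G" "{} \<notin> ?G"
    using finite_subset[OF support_subset finite_F] empty_notin_F support_subset by auto
  obtain z where z: "\<forall>i. (\<Sum>A\<in>?G. z A * indicat_real A i) = 0" "(\<Sum>A\<in>?G. z A) \<le> 0"
    "\<exists>A\<in>?G. z A < 0"
    using dependent_indicators_descent[OF G dep] by blast
  obtain t where t: "0 \<le> t" "\<forall>A\<in>?G. 0 \<le> y A + t * z A" "\<exists>A\<in>?G. z A < 0 \<and> y A + t * z A = 0"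
    using ratio_test[OF G(1) _ z(3), of y] y by (auto simp: exact_cover_def support_def)
  define y' where "y' A = (if A \<in> ?G then y A + t * z A else y A)" for A
  have shift: "(\<Sum>A\<in>F. y' A * f A) = (\<Sum>A\<in>F. y A * f A) + t * (\<Sum>A\<in>?G. z A * f A)" for f
  proof -
    have "(\<Sum>A\<in>F. y' A * f A) = (\<Sum>A\<in>F. y A * f A + (if A \<in> ?G then t * (z A * f A) else 0))"
      by (intro sum.cong) (auto simp: y'_def algebra_simps)
    also have "\<dots> = (\<Sum>A\<in>F. y A * f A) + t * (\<Sum>A\<in>?G. z A * f A)"
      using finite_F Int_absorb1[OF support_subset]
      by (simp add: sum.distrib sum.If_cases sum_distrib_left Int_commute)
    finally show ?thesis .
  qed
  show ?thesis
  proof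
    show "exact_cover y'"
      using y t(2) z(1) shift[of "\<lambda>A. indicat_real A _"]
      by (auto simp: exact_cover_def y'_def)
    show "support y' \<subset> support y"
      using t(3) by (auto simp: support_def y'_def)
    show "(\<Sum>A\<in>F. y' A) \<le> (\<Sum>A\<in>F. y A)"
      using shift[of "\<lambda>_. 1"] t(1) z(2) by (simp add: mult_nonneg_nonpos)
  qed
qed

lemma exact_cover_reduce_to_basic:
  assumes "exact_cover y"
  obtains y' where "exact_cover y'" "indicators_lin_indep (support y')"
    "(\<Sum>A\<in>F. y' A) \<le> (\<Sum>A\<in>F. y A)"
  using assms
proof (induction "card (support y)" arbitrary: y rule: less_induct)
  case less
  show ?case
  proof (cases "indicators_lin_indep (support y)")
    case True
    then show ?thesis using less.prems by blast
  next
    case False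
    obtain y' where y': "exact_cover y'" "support y' \<subset> support y"
      "(\<Sum>A\<in>F. y' A) \<le> (\<Sum>A\<in>F. y A)"
      using exact_cover_pivot[OF less.prems(2) False] by blast
    have "card (support y') < card (support y)"
      using y'(2) finite_subset[OF support_subset finite_F] by (rule psubset_card_mono[rotated])
    then show ?thesis
      using less.hyps[OF _ _ y'(1)] less.prems(1) y'(3) by (meson order_trans)
  qed
qed

lemma basic_exact_cover_unique:
  assumes "exact_cover y1" "exact_cover y2" "support y1 = support y2"
    and indep: "indicators_lin_indep (support y1)"
  shows "\<forall>A\<in>F. y1 A = y2 A"
proof -
  have "(\<Sum>A\<in>support y1. (y1 A - y2 A) * indicat_real A i) = 0" for i
  proof (cases "i \<in> U")
    case True
    have "(\<Sum>A\<in>support y1. (y1 A - y2 A) * indicat_real A i)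
        = (\<Sum>A\<in>F. y1 A * indicat_real A i) - (\<Sum>A\<in>F. y2 A * indicat_real A i)"
      by (simp add: sum_support[of y1] sum_support[of y2] assms(3) left_diff_distrib sum_subtractf)
    then show ?thesis using assms(1,2) True by (simp add: exact_cover_def)
  next
    case False
    then have "i \<notin> A" if "A \<in> support y1" for A using that support_subset F_subsets by blast
    then show ?thesis by simp
  qed
  then have "\<forall>A\<in>support y1. y1 A - y2 A = 0"
    using indep[unfolded indicators_lin_indep_def, rule_format, of "\<lambda>A. y1 A - y2 A"] by blast
  then show ?thesis using assms(3) by (auto simp: support_def)
qed

lemma finite_basic_cover_values:
  "finite {\<Sum>A\<in>F. y A | y. exact_cover y \<and> indicators_lin_indep (support y)}"
proof -
  define Y where "Y = (\<lambda>y. restrict y F) ` {y. exact_cover y \<and> indicators_lin_indep (support y)}"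
  have restrict_eq: "exact_cover (restrict y F) = exact_cover y" "support (restrict y F) = support y"
    "(\<Sum>A\<in>F. restrict y F A) = (\<Sum>A\<in>F. y A)" for y
    by (auto simp: exact_cover_def support_def)
  have "inj_on support Y"
  proof (rule inj_onI)
    fix y1 y2 assume "y1 \<in> Y" "y2 \<in> Y" and supp: "support y1 = support y2"
    then obtain u1 u2 where u: "y1 = restrict u1 F" "y2 = restrict u2 F"
      "exact_cover u1" "exact_cover u2" "indicators_lin_indep (support u1)"
      unfolding Y_def by blast
    then have "\<forall>A\<in>F. u1 A = u2 A"
      using basic_exact_cover_unique[of u1 u2] supp restrict_eq(2) by simp
    then show "y1 = y2" using u(1,2) by (auto simp: fun_eq_iff)
  qed
  moreover have "support ` Y \<subseteq> Pow F" using support_subset by blast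
  ultimately have "finite Y" using finite_F by (meson finite_Pow_iff inj_on_finite)
  moreover have "{\<Sum>A\<in>F. y A | y. exact_cover y \<and> indicators_lin_indep (support y)}
      = (\<lambda>y. \<Sum>A\<in>F. y A) ` Y"
    unfolding Y_def image_image restrict_eq(3) by blast
  ultimately show ?thesis by simp
qed

lemma cover_value_attained_by_basic:
  obtains y where "exact_cover y" "indicators_lin_indep (support y)" "(\<Sum>A\<in>F. y A) = cover_value"
    and "\<And>y'. exact_cover y' \<Longrightarrow> cover_value \<le> (\<Sum>A\<in>F. y' A)"
proof -
  let ?V = "{\<Sum>A\<in>F. y A | y. exact_cover y \<and> indicators_lin_indep (support y)}"
  obtain y0 where "exact_cover y0" "indicators_lin_indep (support y0)"
    using exact_cover_reduce_to_basic[OF exact_cover_singletons] by blast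
  then have "?V \<noteq> {}" by blast
  define m where "m = Min ?V"
  have "m \<in> ?V" unfolding m_def using finite_basic_cover_values \<open>?V \<noteq> {}\<close> by (rule Min_in)
  then obtain y where y: "exact_cover y" "indicators_lin_indep (support y)" "(\<Sum>A\<in>F. y A) = m"
    by blast
  have lower: "m \<le> (\<Sum>A\<in>F. y' A)" if y': "exact_cover y'" for y'
  proof -
    obtain y'' where "exact_cover y''" "indicators_lin_indep (support y'')"
      "(\<Sum>A\<in>F. y'' A) \<le> (\<Sum>A\<in>F. y' A)"
      using exact_cover_reduce_to_basic[OF y'] by blast
    moreover from this(1,2) have "m \<le> (\<Sum>A\<in>F. y'' A)"
      unfolding m_def using finite_basic_cover_values by (intro Min_le) blast+
    ultimately show ?thesis by linarith
  qed
  have "cover_value = m"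
    unfolding cover_value_def using y(1,3) lower by (intro cInf_eq_minimum) auto
  then show ?thesis using that y lower by simp
qed

lemma cover_value_le: "exact_cover y \<Longrightarrow> cover_value \<le> (\<Sum>A\<in>F. y A)"
  by (rule cover_value_attained_by_basic) auto

lemma cover_value_ge_1:
  assumes "U \<noteq> {}"
  shows "1 \<le> cover_value"
proof -
  obtain y where y: "exact_cover y" "(\<Sum>A\<in>F. y A) = cover_value"
    using cover_value_attained_by_basic by blast
  obtain i where "i \<in> U" using assms by blast
  then have "1 = (\<Sum>A\<in>F. y A * indicat_real A i)" using y(1) by (simp add: exact_cover_def)
  also have "\<dots> \<le> (\<Sum>A\<in>F. y A)"
    using y(1) by (intro sum_mono) (auto simp: exact_cover_def indicator_def)
  finally show ?thesis using y(2) by simp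
qed

lemma basic_cover_scaled_integral:
  assumes y: "exact_cover y" "indicators_lin_indep (support y)"
  obtains k :: nat and cnt :: "'a set \<Rightarrow> nat"
  where "1 \<le> k" "int k \<le> maxdet01 (card U)" "\<forall>A\<in>F. real (cnt A) = real k * y A"
proof -
  have "\<forall>i\<in>U. (\<Sum>A\<in>support y. y A * indicat_real A i) = 1"
    using y(1) by (simp add: exact_cover_def sum_support)
  moreover have "support y \<subseteq> Pow U" using support_subset F_subsets by blast
  ultimately obtain k :: nat where k: "1 \<le> k" "int k \<le> maxdet01 (card U)"
    and integral: "\<forall>A\<in>support y. real k * y A \<in> \<int>"
    using indicators_lin_indep_solution_denominator[OF finite_U _ y(2)] by blast
  define cnt where "cnt A = nat \<lfloor>real k * y A\<rfloor>" for A
  have "real (cnt A) = real k * y A" if "A \<in> F" for A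
  proof (cases "A \<in> support y")
    case True
    then obtain m :: int where m: "real k * y A = of_int m" using integral by (meson Ints_cases)
    have "0 \<le> y A" using y(1) that by (simp add: exact_cover_def)
    then have "0 \<le> real k * y A" by simp
    then have "0 \<le> m" using m by simp
    then show ?thesis using m by (simp add: cnt_def)
  next
    case False
    then show ?thesis using that by (simp add: cnt_def support_def)
  qed
  then show ?thesis using that k by blast
qed

end


section \<open>Schedules, packings and exact covers\<close>

lemma conn_time_eq_sum_list: "conn_time xs i = sum_list (map (\<lambda>p. fst p * indicat_real (snd p) i) xs)"
  by (induction xs) (auto simp: conn_time_def)

lemma conn_time_uniform:
  "conn_time (map (\<lambda>b. (c, b)) B) i = c * real (card {j. j < length B \<and> i \<in> B ! j})"
proof -
  have "conn_time (map (\<lambda>b. (c, b)) B) i = c * real (length (filter (\<lambda>b. i \<in> b) B))"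
    by (induction B) (auto simp: conn_time_def algebra_simps)
  then show ?thesis by (simp add: length_filter_conv_card)
qed

lemma conn_time_scale: "conn_time (map (\<lambda>p. (c * fst p, snd p)) xs) i = c * conn_time xs i"
  by (induction xs) (auto simp: conn_time_def algebra_simps)

lemma sum_list_weight_regroup:
  fixes xs :: "(real \<times> 'a set) list"
  assumes "finite F"
  shows "(\<Sum>A\<in>F. sum_list (map fst (filter (\<lambda>p. snd p = A) xs)) * f A)
    = sum_list (map (\<lambda>p. fst p * f (snd p)) (filter (\<lambda>p. snd p \<in> F) xs))"
proof (induction xs)
  case (Cons p xs)
  have "(\<Sum>A\<in>F. sum_list (map fst (filter (\<lambda>p. snd p = A) (p # xs))) * f A)
      = (\<Sum>A\<in>F. sum_list (map fst (filter (\<lambda>p. snd p = A) xs)) * f A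
          + (if snd p = A then fst p * f A else 0))"
    by (intro sum.cong) (auto simp: algebra_simps)
  also have "\<dots> = (\<Sum>A\<in>F. sum_list (map fst (filter (\<lambda>p. snd p = A) xs)) * f A)
      + (if snd p \<in> F then fst p * f (snd p) else 0)"
    using assms by (simp add: sum.distrib)
  finally show ?case using Cons by simp
qed simp

definition disconnect :: "nat \<Rightarrow> real \<Rightarrow> (real \<times> nat set) list \<Rightarrow> (real \<times> nat set) list" where
  "disconnect i \<theta> xs = concat (map (\<lambda>p. if i \<in> snd p
     then [((1 - \<theta>) * fst p, snd p), (\<theta> * fst p, snd p - {i})] else [p]) xs)"

lemma disconnect_simps [simp]:
  "disconnect i \<theta> [] = []"
  "disconnect i \<theta> (p # xs) = (if i \<in> snd p
     then [((1 - \<theta>) * fst p, snd p), (\<theta> * fst p, snd p - {i})] else [p]) @ disconnect i \<theta> xs"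
  by (simp_all add: disconnect_def)

lemma sum_list_disconnect: "sum_list (map fst (disconnect i \<theta> xs)) = sum_list (map fst xs)"
  by (induction xs) (auto simp: algebra_simps)

lemma conn_time_disconnect:
  "conn_time (disconnect i \<theta> xs) j = (if j = i then (1 - \<theta>) * conn_time xs i else conn_time xs j)"
  by (induction xs) (auto simp: conn_time_def algebra_simps)

lemma conn_time_disconnect_excess:
  assumes "1 \<le> conn_time xs i"
  shows "conn_time (disconnect i (1 - 1 / conn_time xs i) xs) i = 1"
  using assms by (simp add: conn_time_disconnect)

lemma disconnect_nonneg:
  assumes "\<forall>p\<in>set xs. 0 \<le> fst p" "0 \<le> \<theta>" "\<theta> \<le> 1"
  shows "\<forall>p\<in>set (disconnect i \<theta> xs). 0 \<le> fst p"
  using assms(1) by (induction xs) (auto simp: assms(2,3))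

lemma disconnect_downward_closed:
  assumes "\<And>A B. B \<subseteq> A \<Longrightarrow> P A \<Longrightarrow> P B" "\<forall>p\<in>set xs. P (snd p)"
  shows "\<forall>p\<in>set (disconnect i \<theta> xs). P (snd p)"
  using assms(2) by (induction xs) (auto intro: assms(1)[OF Diff_subset])

lemma trim_conn_time:
  assumes U: "finite U" and nonneg: "\<forall>p\<in>set xs. 0 \<le> fst p" and cover: "\<forall>i\<in>U. 1 \<le> conn_time xs i"
    and down: "\<And>A B. B \<subseteq> A \<Longrightarrow> P A \<Longrightarrow> P B" and P: "\<forall>p\<in>set xs. P (snd p)"
  obtains ys where "\<forall>p\<in>set ys. 0 \<le> fst p" "\<forall>p\<in>set ys. P (snd p)"
    "sum_list (map fst ys) = sum_list (map fst xs)" "\<forall>i\<in>U. conn_time ys i = 1"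
proof -
  have "\<exists>ys. (\<forall>p\<in>set ys. 0 \<le> fst p) \<and> (\<forall>p\<in>set ys. P (snd p)) \<and>
      sum_list (map fst ys) = sum_list (map fst xs) \<and>
      (\<forall>i. conn_time ys i = (if i \<in> U then 1 else conn_time xs i))"
    using U cover
  proof (induction U rule: finite_induct)
    case empty
    then show ?case using nonneg P by auto
  next
    case (insert a U)
    then obtain ys where ys: "\<forall>p\<in>set ys. 0 \<le> fst p" "\<forall>p\<in>set ys. P (snd p)"
      "sum_list (map fst ys) = sum_list (map fst xs)"
      "\<forall>i. conn_time ys i = (if i \<in> U then 1 else conn_time xs i)"
      by auto
    have excess: "1 \<le> conn_time ys a" using insert.hyps(2) insert.prems ys(4) by simp
    let ?zs = "disconnect a (1 - 1 / conn_time ys a) ys"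
    have "conn_time ?zs i = (if i \<in> insert a U then 1 else conn_time xs i)" for i
    proof (cases "i = a")
      case True
      then show ?thesis using conn_time_disconnect_excess[OF excess] by simp
    next
      case False
      then show ?thesis using ys(4) by (simp add: conn_time_disconnect)
    qed
    moreover have "\<forall>p\<in>set ?zs. 0 \<le> fst p"
      using excess by (intro disconnect_nonneg ys(1)) auto
    moreover have "\<forall>p\<in>set ?zs. P (snd p)"
      by (rule disconnect_downward_closed[OF down ys(2)])
    moreover have "sum_list (map fst ?zs) = sum_list (map fst xs)"
      using ys(3) by (simp add: sum_list_disconnect)
    ultimately show ?case by (intro exI[of _ ?zs]) simp
  qed
  then show ?thesis using that by auto
qed

lemma OPT_attained:
  assumes "is_k_packing S D n k B"
  obtains B' where "is_k_packing S D n k B'" "length B' = OPT S D n k" "OPT S D n k \<le> length B"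
proof -
  let ?P = "\<lambda>m. \<exists>B'. is_k_packing S D n k B' \<and> length B' = m"
  have "?P (length B)" using assms by blast
  then have "?P (OPT S D n k)" "OPT S D n k \<le> length B"
    unfolding OPT_def by (rule LeastI, rule Least_le)
  then show ?thesis using that by blast
qed

locale electricity_instance =
  fixes S :: real and D :: "nat \<Rightarrow> real" and n :: nat
  assumes n_pos: "1 \<le> n" and demands: "\<forall>i\<in>{1..n}. 0 \<le> D i \<and> D i \<le> S"
begin

definition configs :: "nat set set" where
  "configs = {A. feasible_set S D n A \<and> A \<noteq> {}}"

sublocale exact_cover_lp "{1..n}" configs
  by unfold_locales (auto simp: configs_def feasible_set_def demands)

lemma feasible_set_subset:
  assumes "B \<subseteq> A" "feasible_set S D n A"
  shows "feasible_set S D n B"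
proof -
  have "A \<subseteq> {1..n}" using assms(2) by (simp add: feasible_set_def)
  then have "(\<Sum>i\<in>B. D i) \<le> (\<Sum>i\<in>A. D i)"
    using assms(1) demands by (intro sum_mono2) (auto intro: finite_subset)
  then show ?thesis using assms by (auto simp: feasible_set_def)
qed

lemma one_le_cover_value: "1 \<le> cover_value"
  using cover_value_ge_1 n_pos by simp

lemma cover_value_le_list_total:
  assumes nonneg: "\<forall>p\<in>set xs. 0 \<le> fst p" and feasible: "\<forall>p\<in>set xs. feasible_set S D n (snd p)"
    and cover: "\<forall>i\<in>{1..n}. conn_time xs i = 1"
  shows "cover_value \<le> sum_list (map fst xs)"
proof -
  define y where "y A = sum_list (map fst (filter (\<lambda>p. snd p = A) xs))" for A
  have regroup: "(\<Sum>A\<in>configs. y A * f A)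
      = sum_list (map (\<lambda>p. fst p * f (snd p)) (filter (\<lambda>p. snd p \<in> configs) xs))" for f
    unfolding y_def by (rule sum_list_weight_regroup[OF finite_F])
  have "exact_cover y"
    unfolding exact_cover_def
  proof (intro conjI ballI)
    fix A show "0 \<le> y A" unfolding y_def using nonneg by (intro sum_list_nonneg) auto
  next
    fix i assume "i \<in> {1..n}"
    have "(\<Sum>A\<in>configs. y A * indicat_real A i) = conn_time xs i"
      unfolding regroup conn_time_eq_sum_list
      using feasible by (intro sum_list_map_filter) (auto simp: configs_def)
    then show "(\<Sum>A\<in>configs. y A * indicat_real A i) = 1" using cover \<open>i \<in> {1..n}\<close> by simp
  qed
  moreover have "(\<Sum>A\<in>configs. y A) \<le> sum_list (map fst xs)"
  proof -
    have "(\<Sum>A\<in>configs. y A) = sum_list (map (\<lambda>p. if snd p \<in> configs then fst p else 0) xs)"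
      using regroup[of "\<lambda>_. 1"] by (simp add: sum_list_map_filter')
    also have "\<dots> \<le> sum_list (map fst xs)" using nonneg by (intro sum_list_mono) auto
    finally show ?thesis .
  qed
  ultimately show ?thesis using cover_value_le by fastforce
qed

lemma k_packing_length_ge:
  assumes k: "1 \<le> k" and B: "is_k_packing S D n k B"
  shows "real k * cover_value \<le> real (length B)"
proof -
  let ?xs = "map (\<lambda>b. (1 / real k, b)) B"
  have "cover_value \<le> sum_list (map fst ?xs)"
  proof (rule cover_value_le_list_total)
    show "\<forall>p\<in>set ?xs. 0 \<le> fst p" by auto
    show "\<forall>p\<in>set ?xs. feasible_set S D n (snd p)" using B by (auto simp: is_k_packing_def)
    show "\<forall>i\<in>{1..n}. conn_time ?xs i = 1" using B k by (simp add: conn_time_uniform is_k_packing_def)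
  qed
  also have "sum_list (map fst ?xs) = real (length B) / real k" by (simp add: comp_def sum_list_triv)
  finally show ?thesis using k by (simp add: field_simps)
qed

lemma schedule_value_le:
  assumes T: "0 < T" and sch: "is_schedule S D n T sch"
  shows "(MIN i\<in>{1..n}. conn_time sch i) / T \<le> 1 / cover_value"
proof (cases "(MIN i\<in>{1..n}. conn_time sch i) \<le> 0")
  case True
  then have "(MIN i\<in>{1..n}. conn_time sch i) / T \<le> 0" using T by (simp add: divide_nonpos_pos)
  moreover have "0 \<le> 1 / cover_value" using one_le_cover_value by simp
  ultimately show ?thesis by linarith
next
  case False
  define m where "m = (MIN i\<in>{1..n}. conn_time sch i)"
  have m: "0 < m" using False unfolding m_def by simp
  have sch_props: "\<forall>p\<in>set sch. 0 < fst p \<and> feasible_set S D n (snd p)" "sum_list (map fst sch) = T"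
    using sch by (auto simp: is_schedule_def case_prod_beta)
  define c where "c = 1 / m"
  have c: "0 < c" "c * m = 1" using m unfolding c_def by simp_all
  let ?xs = "map (\<lambda>p. (c * fst p, snd p)) sch"
  have "\<forall>i\<in>{1..n}. 1 \<le> conn_time ?xs i"
  proof
    fix i assume "i \<in> {1..n}"
    then have "m \<le> conn_time sch i" unfolding m_def by simp
    then have "c * m \<le> c * conn_time sch i" using c(1) by simp
    then show "1 \<le> conn_time ?xs i" using c(2) by (simp add: conn_time_scale)
  qed
  moreover have "\<forall>p\<in>set ?xs. 0 \<le> fst p" "\<forall>p\<in>set ?xs. feasible_set S D n (snd p)"
    using sch_props(1) c(1) by auto
  ultimately obtain ys where ys: "\<forall>p\<in>set ys. 0 \<le> fst p" "\<forall>p\<in>set ys. feasible_set S D n (snd p)"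
    "sum_list (map fst ys) = sum_list (map fst ?xs)" "\<forall>i\<in>{1..n}. conn_time ys i = 1"
    using trim_conn_time[of "{1..n}" ?xs "feasible_set S D n"] feasible_set_subset by blast
  have "cover_value \<le> c * T"
    using cover_value_le_list_total[OF ys(1,2,4)] ys(3) sch_props(2)
    by (simp add: comp_def sum_list_const_mult)
  then show ?thesis
    using m T one_le_cover_value unfolding m_def[symmetric] c_def by (simp add: field_simps)
qed

lemma k_packing_of_integral_cover:
  assumes "exact_cover y" and cnt: "\<forall>A\<in>configs. real (cnt A) = real k * y A"
  obtains B where "is_k_packing S D n k B" "real (length B) = real k * (\<Sum>A\<in>configs. y A)"
proof -
  obtain fs where fs: "set fs = configs" "distinct fs" using finite_distinct_list[OF finite_F] by blast
  define B where "B = concat (map (\<lambda>A. replicate (cnt A) A) fs)"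
  have length_filter: "length (filter P B) = (\<Sum>A\<in>configs. if P A then cnt A else 0)" for P
    unfolding B_def using fs
    by (simp add: filter_concat length_concat comp_def filter_replicate sum_list_distinct_conv_sum_set
        if_distrib[of length] cong: if_cong)
  show ?thesis
  proof
    show "is_k_packing S D n k B"
      unfolding is_k_packing_def
    proof (intro conjI ballI)
      fix b assume "b \<in> set B"
      then show "feasible_set S D n b" using fs(1) by (auto simp: B_def configs_def)
    next
      fix i assume "i \<in> {1..n}"
      have "real (length (filter (\<lambda>b. i \<in> b) B)) = real k * (\<Sum>A\<in>configs. y A * indicat_real A i)"
        unfolding length_filter of_nat_sum using cnt
        by (auto simp: sum_distrib_left indicator_def intro!: sum.cong)
      also have "(\<Sum>A\<in>configs. y A * indicat_real A i) = 1"
        using \<open>exact_cover y\<close> \<open>i \<in> {1..n}\<close> unfolding exact_cover_def by blast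
      finally show "card {j. j < length B \<and> i \<in> B ! j} = k"
        by (simp add: length_filter_conv_card)
    qed
    show "real (length B) = real k * (\<Sum>A\<in>configs. y A)"
      using length_filter[of "\<lambda>_. True"] cnt by (simp add: sum_distrib_left)
  qed
qed

lemma uniform_schedule:
  assumes T: "0 < T" and B: "is_k_packing S D n k B" "B \<noteq> []"
  shows "is_schedule S D n T (map (\<lambda>b. (T / real (length B), b)) B)"
    and "(MIN i\<in>{1..n}. conn_time (map (\<lambda>b. (T / real (length B), b)) B) i) / T
      = real k / real (length B)"
proof -
  let ?sch = "map (\<lambda>b. (T / real (length B), b)) B"
  show "is_schedule S D n T ?sch"
    using B T by (auto simp: is_schedule_def is_k_packing_def comp_def sum_list_triv)
  have "\<forall>i\<in>{1..n}. conn_time ?sch i = T / real (length B) * real k"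
    using B by (simp add: conn_time_uniform is_k_packing_def)
  then have "(\<lambda>i. conn_time ?sch i) ` {1..n} = {T / real (length B) * real k}"
    using n_pos by auto
  then show "(MIN i\<in>{1..n}. conn_time ?sch i) / T = real k / real (length B)"
    using T by simp
qed

lemma exists_k_packing_attaining_cover_value:
  obtains k B where "1 \<le> k" "int k \<le> maxdet01 n" "is_k_packing S D n k B"
    "real (length B) = real k * cover_value"
proof -
  obtain y where y: "exact_cover y" "indicators_lin_indep (support y)" "(\<Sum>A\<in>configs. y A) = cover_value"
    using cover_value_attained_by_basic by blast
  obtain k cnt where k: "1 \<le> k" "int k \<le> maxdet01 (card {1..n})"
    and cnt: "\<forall>A\<in>configs. real (cnt A) = real k * y A"
    using basic_cover_scaled_integral[OF y(1,2)] by blast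
  obtain B where "is_k_packing S D n k B" "real (length B) = real k * (\<Sum>A\<in>configs. y A)"
    using k_packing_of_integral_cover[OF y(1) cnt] by blast
  then show ?thesis using that k y(3) by simp
qed

lemma OPT_eq_cover_value:
  assumes k: "1 \<le> k" and B: "is_k_packing S D n k B" "real (length B) = real k * cover_value"
  shows "real (OPT S D n k) = real k * cover_value"
proof -
  obtain B' where "is_k_packing S D n k B'" "length B' = OPT S D n k" "OPT S D n k \<le> length B"
    using OPT_attained[OF B(1)] by blast
  then show ?thesis using k_packing_length_ge[OF k, of B'] B(2) by simp
qed

lemma egal_conn_time_eq_inverse_cover_value:
  assumes T: "0 < T"
  shows "egal_conn_time S D n T = 1 / cover_value"
  unfolding egal_conn_time_def
proof (rule cSup_eq_maximum)
  obtain k B where k: "1 \<le> k" and B: "is_k_packing S D n k B" "real (length B) = real k * cover_value"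
    using exists_k_packing_attaining_cover_value by blast
  then have "B \<noteq> []" using one_le_cover_value by auto
  then show "1 / cover_value \<in> {(MIN i\<in>{1..n}. conn_time sch i) / T | sch. is_schedule S D n T sch}"
    using uniform_schedule[OF T B(1)] B(2) k one_le_cover_value by force
qed (use schedule_value_le[OF T] in blast)

end

theorem theorem1:
  fixes S T :: real and D :: "nat \<Rightarrow> real" and n :: nat
  assumes "S > 0" and "T > 0" and "n \<ge> 1"
    and "\<forall>i\<in>{1..n}. 0 < D i \<and> D i \<le> S"
  shows "\<exists>k::nat. 1 \<le> k \<and> int k \<le> maxdet01 n \<and>
           egal_conn_time S D n T = real k / real (OPT S D n k) \<and>
           (\<forall>B. is_k_packing S D n k B \<and> length B = OPT S D n k \<longrightarrow>
              (let sch = map (\<lambda>b. (T / real (length B), b)) B in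
                 is_schedule S D n T sch \<and>
                 (MIN i\<in>{1..n}. conn_time sch i) / T = egal_conn_time S D n T))"
proof -
  interpret electricity_instance S D n
    using assms(3,4) by unfold_locales auto
  obtain k B0 where k: "1 \<le> k" "int k \<le> maxdet01 n"
    and B0: "is_k_packing S D n k B0" "real (length B0) = real k * cover_value"
    by (rule exists_k_packing_attaining_cover_value)
  have OPT: "real (OPT S D n k) = real k * cover_value"
    using OPT_eq_cover_value[OF k(1) B0] .
  have egal: "egal_conn_time S D n T = real k / real (OPT S D n k)"
    using egal_conn_time_eq_inverse_cover_value[OF assms(2)] OPT k(1) one_le_cover_value by simp
  have "1 \<le> real k * cover_value"
    using mult_mono[of 1 "real k" 1 cover_value] k(1) one_le_cover_value by simp
  then have "0 < OPT S D n k" using OPT by simp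
  then have "let sch = map (\<lambda>b. (T / real (length B), b)) B in
      is_schedule S D n T sch \<and> (MIN i\<in>{1..n}. conn_time sch i) / T = egal_conn_time S D n T"
    if B: "is_k_packing S D n k B" "length B = OPT S D n k" for B
  proof -
    have "B \<noteq> []" using B(2) \<open>0 < OPT S D n k\<close> by auto
    then show ?thesis using uniform_schedule[OF assms(2) B(1)] B(2) egal by (simp add: Let_def)
  qed
  then show ?thesis using k egal by blast
qed

end
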